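(* Let $q\ge 7$ and $s\in[1,7]$ be integers, $C$ a finite set with $|C|=2q+s$, and $M\in\mathcal M(6,q,C)$. If $\{i,k\}\subseteq\{1,\dots,6\}$ with $i\ne k$ and $r(i,k)\ge 1$, then $r(i,k)+r_{3+}(i,k)\le 8-s$.
   Context: $\mathcal M(6,q,C)$ is the set of $6\times q$ matrices $M$ with entries from $C$ such that each row has $q$ pairwise distinct entries, each column has $6$ pairwise distinct entries, and every pair of distinct colours of $C$ appears together in some row or some column of $M$. The frequency of a colour is the number of entries of $M$ equal to it. For rows $i\ne k$, $r(i,k)$ is the number of colours of frequency exactly $2$ appearing in both row $i$ and row $k$, and $r_{3+}(i,k)$ is the number of colours of frequency at least $3$ appearing in both row $i$ and row $k$. *)

theory Defs
  imports Main
begin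

text \<open>Rows are indexed 0..5 (corresponding to 1..6 in the paper).\<close>

definition in_M6 :: "nat \<Rightarrow> 'c set \<Rightarrow> (nat \<Rightarrow> nat \<Rightarrow> 'c) \<Rightarrow> bool" where
  "in_M6 q C M \<longleftrightarrow>
     (\<forall>i<6. \<forall>j<q. M i j \<in> C) \<and>
     (\<forall>i<6. inj_on (M i) {..<q}) \<and>
     (\<forall>j<q. inj_on (\<lambda>i. M i j) {..<6}) \<and>
     (\<forall>a\<in>C. \<forall>b\<in>C. a \<noteq> b \<longrightarrow>
        (\<exists>i<6. a \<in> M i ` {..<q} \<and> b \<in> M i ` {..<q}) \<or>
        (\<exists>j<q. a \<in> (\<lambda>i. M i j) ` {..<6} \<and> b \<in> (\<lambda>i. M i j) ` {..<6}))"

definition freq :: "nat \<Rightarrow> (nat \<Rightarrow> nat \<Rightarrow> 'c) \<Rightarrow> 'c \<Rightarrow> nat" where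
  "freq q M c = card {(i, j). i < 6 \<and> j < q \<and> M i j = c}"

definition row_set :: "nat \<Rightarrow> (nat \<Rightarrow> nat \<Rightarrow> 'c) \<Rightarrow> nat \<Rightarrow> 'c set" where
  "row_set q M i = M i ` {..<q}"

definition r2 :: "nat \<Rightarrow> (nat \<Rightarrow> nat \<Rightarrow> 'c) \<Rightarrow> nat \<Rightarrow> nat \<Rightarrow> nat" where
  "r2 q M i k = card {c \<in> row_set q M i \<inter> row_set q M k. freq q M c = 2}"

definition r3p :: "nat \<Rightarrow> (nat \<Rightarrow> nat \<Rightarrow> 'c) \<Rightarrow> nat \<Rightarrow> nat \<Rightarrow> nat" where
  "r3p q M i k = card {c \<in> row_set q M i \<inter> row_set q M k. freq q M c \<ge> 3}"

end

theory Submission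
  imports Defs
begin

text \<open>Let c be a colour of frequency 2, occurring in rows i and k at columns j1 and j2.
  Every other colour must share a row or a column with c, and the only candidates are
  the colour sets R_i, R_k of rows i and k and the four remaining cells of each of the
  columns j1 and j2. Hence |C| \<le> |R_i \<union> R_k| + 8 = 2q - |R_i \<inter> R_k| + 8, so at most
  8 - s colours are common to both rows, and r(i,k) + r_3+(i,k) counts some of them.\<close>

lemma finite_row_set: "finite (row_set q M i)"
  unfolding row_set_def by simp

lemma card_row_set:
  assumes "in_M6 q C M" and "i < 6"
  shows "card (row_set q M i) = q"
  using assms unfolding in_M6_def row_set_def by (simp add: card_image)

lemma freq_two_positions:
  assumes "freq q M c = 2" and "i < 6" and "k < 6" and "i \<noteq> k"
    and "j1 < q" and "j2 < q" and "M i j1 = c" and "M k j2 = c"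
  shows "{(l, j). l < 6 \<and> j < q \<and> M l j = c} = {(i, j1), (k, j2)}"
proof -
  let ?P = "{(l, j). l < 6 \<and> j < q \<and> M l j = c}"
  have "finite ?P"
    by (rule finite_subset[of _ "{..<6} \<times> {..<q}"]) auto
  moreover have "{(i, j1), (k, j2)} \<subseteq> ?P"
    using assms(2,3,5-8) by auto
  moreover have "card {(i, j1), (k, j2)} = card ?P"
    using assms(1,4) unfolding freq_def by simp
  ultimately have "{(i, j1), (k, j2)} = ?P"
    by (rule card_subset_eq)
  then show ?thesis ..
qed

lemma colours_subset_rows_and_columns:
  assumes M: "in_M6 q C M" and "freq q M c = 2" and "i < 6" and "k < 6" and "i \<noteq> k"
    and "j1 < q" and "j2 < q" and "M i j1 = c" and "M k j2 = c"
  shows "C \<subseteq> row_set q M i \<union> row_set q M k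
           \<union> (\<lambda>l. M l j1) ` ({..<6} - {i, k}) \<union> (\<lambda>l. M l j2) ` ({..<6} - {i, k})"
    (is "C \<subseteq> ?cover")
proof
  have at_c: "(l = i \<and> j = j1) \<or> (l = k \<and> j = j2)" if "l < 6" "j < q" "M l j = c" for l j
    using freq_two_positions[OF assms(2-9)] that by blast
  have "c \<in> C"
    using M assms(3,6,8) unfolding in_M6_def by blast
  fix a assume "a \<in> C"
  show "a \<in> ?cover"
  proof (cases "a = c")
    case True
    then show ?thesis
      using assms(6,8) unfolding row_set_def by auto
  next
    case False
    with M \<open>a \<in> C\<close> \<open>c \<in> C\<close> consider
        (row) l where "l < 6" "c \<in> M l ` {..<q}" "a \<in> M l ` {..<q}"
      | (column) j where "j < q" "c \<in> (\<lambda>l. M l j) ` {..<6}" "a \<in> (\<lambda>l. M l j) ` {..<6}"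
      unfolding in_M6_def by metis
    then show ?thesis
    proof cases
      case row
      then have "l = i \<or> l = k"
        using at_c by blast
      then show ?thesis
        using row unfolding row_set_def by auto
    next
      case column
      then obtain l l' where "l < 6" "M l j = c" "l' < 6" "a = M l' j"
        by auto
      then have "j = j1 \<or> j = j2"
        using at_c column(1) by blast
      then show ?thesis
        using \<open>l' < 6\<close> \<open>a = M l' j\<close> column(1) unfolding row_set_def by auto
    qed
  qed
qed

lemma card_colours_plus_common_row_colours_le:
  assumes M: "in_M6 q C M" and "i < 6" and "k < 6" and "i \<noteq> k"
    and c: "c \<in> row_set q M i \<inter> row_set q M k" and "freq q M c = 2"
  shows "card C + card (row_set q M i \<inter> row_set q M k) \<le> 2 * q + 8"
proof -
  let ?Ri = "row_set q M i" and ?Rk = "row_set q M k"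
  obtain j1 j2 where "j1 < q" "j2 < q" "M i j1 = c" "M k j2 = c"
    using c unfolding row_set_def by auto
  let ?rest = "{..<6::nat} - {i, k}"
  let ?S1 = "(\<lambda>l. M l j1) ` ?rest" and ?S2 = "(\<lambda>l. M l j2) ` ?rest"
  have card_rest: "card ?rest = 4"
    using assms(2-4) by simp
  have "card C \<le> card (?Ri \<union> ?Rk \<union> ?S1 \<union> ?S2)"
    using colours_subset_rows_and_columns[OF assms(1,6,2-4) \<open>j1 < q\<close> \<open>j2 < q\<close>]
      \<open>M i j1 = c\<close> \<open>M k j2 = c\<close>
    by (intro card_mono) (auto simp: finite_row_set)
  also have "\<dots> \<le> card (?Ri \<union> ?Rk) + card ?S1 + card ?S2"
    by (meson card_Un_le add_le_mono order_trans le_refl)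
  also have "\<dots> \<le> card (?Ri \<union> ?Rk) + 8"
    using card_image_le[of ?rest "\<lambda>l. M l j1"] card_image_le[of ?rest "\<lambda>l. M l j2"] card_rest
    by simp
  finally have "card C \<le> card (?Ri \<union> ?Rk) + 8" .
  moreover have "card (?Ri \<union> ?Rk) + card (?Ri \<inter> ?Rk) = 2 * q"
    using card_Un_Int[OF finite_row_set finite_row_set, of q M i q M k]
      card_row_set[OF M \<open>i < 6\<close>] card_row_set[OF M \<open>k < 6\<close>]
    by simp
  ultimately show ?thesis
    by linarith
qed

lemma r2_plus_r3p_le_card_common_row_colours:
  "r2 q M i k + r3p q M i k \<le> card (row_set q M i \<inter> row_set q M k)"
proof -
  let ?T = "row_set q M i \<inter> row_set q M k"
  have "r2 q M i k + r3p q M i k = card ({c \<in> ?T. freq q M c = 2} \<union> {c \<in> ?T. freq q M c \<ge> 3})"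
    unfolding r2_def r3p_def by (subst card_Un_disjoint) (auto simp: finite_row_set)
  also have "\<dots> \<le> card ?T"
    by (intro card_mono) (auto simp: finite_row_set)
  finally show ?thesis .
qed

theorem claim2:
  fixes q s :: nat and C :: "'c set" and M :: "nat \<Rightarrow> nat \<Rightarrow> 'c" and i k :: nat
  assumes "q \<ge> 7" and "1 \<le> s" and "s \<le> 7"
    and "finite C" and "card C = 2 * q + s"
    and "in_M6 q C M"
    and "i < 6" and "k < 6" and "i \<noteq> k"
    and "r2 q M i k \<ge> 1"
  shows "r2 q M i k + r3p q M i k \<le> 8 - s"
proof -
  have "{c \<in> row_set q M i \<inter> row_set q M k. freq q M c = 2} \<noteq> {}"
    using assms(10) unfolding r2_def by (metis card.empty not_one_le_zero)
  then obtain c where "c \<in> row_set q M i \<inter> row_set q M k" and "freq q M c = 2"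
    by blast
  then have "card C + card (row_set q M i \<inter> row_set q M k) \<le> 2 * q + 8"
    using card_colours_plus_common_row_colours_le[OF assms(6-9)] by blast
  then show ?thesis
    using r2_plus_r3p_le_card_common_row_colours[of q M i k] assms(5) by linarith
qed

end
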